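(* Let $k$ be a field of characteristic $p>0$ and $A$ an infinite-dimensional $k$-vector space. For every $r\ge0$, $S_{\le r}A\neq SA$.
   Context: $SA=\bigoplus_{m\ge0}S^mA$ is the symmetric algebra of $A$ ($S^0A=k$, $S^mA$ the $m$-th symmetric power, with pure symmetric tensors $a_1\otimes_s\dots\otimes_s a_m$). The linear map $\partial\colon SA\to SA\otimes A$ is given by $\partial(\lambda)=0$ for $\lambda\in S^0A$ and $\partial(a_1\otimes_s\dots\otimes_s a_m)=\sum_{i=1}^m(a_1\otimes_s\dots\otimes_s a_{i-1}\otimes_s a_{i+1}\otimes_s\dots\otimes_s a_m)\otimes a_i$. Iterates: $\partial^0=1_{SA}$ and $\partial^{r+1}:=\partial;(\partial^r\otimes 1_A)\colon SA\to SA\otimes A^{\otimes(r+1)}$. Define $S_{\le r}A:=\ker(\partial^{r+1})\subseteq SA$. *)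

theory Defs
  imports Main "HOL-Library.Poly_Mapping"
begin

(* The infinite-dimensional k-vector space A is taken with a basis
indexed by the (infinite) type 'i, i.e. A = 'i \<Rightarrow>\<^sub>0 'k.
Then S^m A has basis the monomials of degree m, so
SA = ('i \<Rightarrow>\<^sub>0 nat) \<Rightarrow>\<^sub>0 'k (exponent vector alpha stands for
e_{i1} \<otimes>_s ... \<otimes>_s e_{im} with multiplicities alpha), and
SA \<otimes> A^{\<otimes>n} has basis pairs (alpha, [i1,...,in]);
we represent it by ((('i \<Rightarrow>\<^sub>0 nat) \<times> 'i list) \<Rightarrow>\<^sub>0 'k), words of length n. *)

type_synonym ('i, 'k) SA = "('i \<Rightarrow>\<^sub>0 nat) \<Rightarrow>\<^sub>0 'k"
type_synonym ('i, 'k) SAT = "(('i \<Rightarrow>\<^sub>0 nat) \<times> 'i list) \<Rightarrow>\<^sub>0 'k"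

(* The map partial on a basis monomial: removing one factor e_i (which occurs alpha i times)
and putting it in the A slot. *)
definition partial_mono :: "('i \<Rightarrow>\<^sub>0 nat) \<Rightarrow> ('i, 'k::field) SAT" where
  "partial_mono \<alpha> =
     (\<Sum>i\<in>Poly_Mapping.keys \<alpha>. Poly_Mapping.single (\<alpha> - Poly_Mapping.single i 1, [i]) (of_nat (Poly_Mapping.lookup \<alpha> i)))"

definition partial :: "('i, 'k::field) SA \<Rightarrow> ('i, 'k) SAT" where
  "partial s = (\<Sum>\<alpha>\<in>Poly_Mapping.keys s. Poly_Mapping.map ((*) (Poly_Mapping.lookup s \<alpha>)) (partial_mono \<alpha>))"

definition append_factor :: "'i \<Rightarrow> ('i, 'k::field) SAT \<Rightarrow> ('i, 'k) SAT" where
  "append_factor i t = (\<Sum>(\<beta>, w)\<in>Poly_Mapping.keys t. Poly_Mapping.single (\<beta>, w @ [i]) (Poly_Mapping.lookup t (\<beta>, w)))"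

(* Given linear f : SA \<rightarrow> SA \<otimes> A^{\<otimes>r}, the map f \<otimes> 1_A : SA \<otimes> A \<rightarrow> SA \<otimes> A^{\<otimes>(r+1)}. *)
definition tensor_id :: "(('i, 'k::field) SA \<Rightarrow> ('i, 'k) SAT) \<Rightarrow> ('i, 'k) SAT \<Rightarrow> ('i, 'k) SAT" where
  "tensor_id f t = (\<Sum>(\<alpha>, w)\<in>Poly_Mapping.keys t.
      (case w of [i] \<Rightarrow> Poly_Mapping.map ((*) (Poly_Mapping.lookup t (\<alpha>, w))) (append_factor i (f (Poly_Mapping.single \<alpha> 1))) | _ \<Rightarrow> 0))"

definition embed0 :: "('i, 'k::field) SA \<Rightarrow> ('i, 'k) SAT" where
  "embed0 s = (\<Sum>\<alpha>\<in>Poly_Mapping.keys s. Poly_Mapping.single (\<alpha>, []) (Poly_Mapping.lookup s \<alpha>))"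

fun partial_pow :: "nat \<Rightarrow> ('i, 'k::field) SA \<Rightarrow> ('i, 'k) SAT" where
  "partial_pow 0 = embed0"
| "partial_pow (Suc r) = (\<lambda>s. tensor_id (partial_pow r) (partial s))"

definition S_le :: "nat \<Rightarrow> ('i, 'k::field) SA set" where
  "S_le r = {s. partial_pow (Suc r) s = 0}"

end

theory Submission
  imports Defs
begin

(* A squarefree monomial e_{i_1} \<otimes>_s ... \<otimes>_s e_{i_n} with distinct i_j is not killed by \<partial>^n:
   since no basis vector occurs twice, no multiplicity ever enters as a coefficient, and
   \<partial>^n sends it to the sum of e_{w_1} \<otimes> ... \<otimes> e_{w_n} over all orderings w of its factors,
   each with coefficient 1. An infinite-dimensional A has such a monomial of degree r + 1. *)

lemma map_times_one: "Poly_Mapping.map ((*) (1::'a::semiring_1)) p = p"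
  by transfer (auto simp: fun_eq_iff when_def)

lemma lookup_sum_single_inj_on:
  assumes "finite S" "inj_on g S" "x \<in> S"
  shows "Poly_Mapping.lookup (\<Sum>y\<in>S. Poly_Mapping.single (g y) (c y)) (g x) = c x"
proof -
  have "Poly_Mapping.lookup (\<Sum>y\<in>S. Poly_Mapping.single (g y) (c y)) (g x) =
      (\<Sum>y\<in>S. c y when g y = g x)"
    by (simp add: Poly_Mapping.lookup_sum Poly_Mapping.lookup_single)
  also have "\<dots> = (\<Sum>y\<in>S. if y = x then c y else 0)"
    using assms by (intro sum.cong) (auto simp: when_def inj_on_def)
  also have "\<dots> = c x"
    using assms by simp
  finally show ?thesis .
qed

lemma keys_sum_single_inj_on:
  assumes "finite S" "inj_on g S" "\<And>x. x \<in> S \<Longrightarrow> c x \<noteq> 0"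
  shows "Poly_Mapping.keys (\<Sum>y\<in>S. Poly_Mapping.single (g y) (c y)) = g ` S"
proof
  show "Poly_Mapping.keys (\<Sum>y\<in>S. Poly_Mapping.single (g y) (c y)) \<subseteq> g ` S"
    using Poly_Mapping.keys_sum[of "\<lambda>y. Poly_Mapping.single (g y) (c y)" S] by auto
  show "g ` S \<subseteq> Poly_Mapping.keys (\<Sum>y\<in>S. Poly_Mapping.single (g y) (c y))"
    using lookup_sum_single_inj_on[OF assms(1,2), where c = c] assms(3) by (force simp: in_keys_iff)
qed

lemma sum_keys_sum_single_inj_on:
  assumes "finite S" "inj_on g S" "\<And>x. x \<in> S \<Longrightarrow> c x \<noteq> 0"
  shows "(\<Sum>k\<in>Poly_Mapping.keys (\<Sum>y\<in>S. Poly_Mapping.single (g y) (c y)). H k) =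
    (\<Sum>x\<in>S. H (g x))"
proof -
  have "Poly_Mapping.keys (\<Sum>y\<in>S. Poly_Mapping.single (g y) (c y)) = g ` S"
    by (rule keys_sum_single_inj_on[OF assms])
  then show ?thesis
    using assms(2) by (simp add: sum.reindex)
qed

lemma append_factor_sum_single_inj_on:
  assumes "finite S" "inj_on (\<lambda>x. (a x, w x)) S" "\<And>x. x \<in> S \<Longrightarrow> c x \<noteq> 0"
  shows "append_factor i (\<Sum>x\<in>S. Poly_Mapping.single (a x, w x) (c x)) =
    (\<Sum>x\<in>S. Poly_Mapping.single (a x, w x @ [i]) (c x))"
  unfolding append_factor_def
  by (simp add: sum_keys_sum_single_inj_on[OF assms]
      lookup_sum_single_inj_on[OF assms(1,2), where c = c] cong: sum.cong)

lemma tensor_id_sum_single_inj_on: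
  assumes "finite S" "inj_on (\<lambda>x. (a x, [i x])) S" "\<And>x. x \<in> S \<Longrightarrow> c x \<noteq> 0"
  shows "tensor_id f (\<Sum>x\<in>S. Poly_Mapping.single (a x, [i x]) (c x)) =
    (\<Sum>x\<in>S. Poly_Mapping.map ((*) (c x)) (append_factor (i x) (f (Poly_Mapping.single (a x) 1))))"
  unfolding tensor_id_def
  by (simp add: sum_keys_sum_single_inj_on[OF assms]
      lookup_sum_single_inj_on[OF assms(1,2), where c = c] cong: sum.cong)

definition word_monomial :: "'i list \<Rightarrow> 'i \<Rightarrow>\<^sub>0 nat" where
  "word_monomial w = (\<Sum>j\<leftarrow>w. Poly_Mapping.single j 1)"

lemma word_monomial_snoc: "word_monomial (w @ [i]) = word_monomial w + Poly_Mapping.single i 1"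
  by (simp add: word_monomial_def)

lemma lookup_word_monomial: "Poly_Mapping.lookup (word_monomial w) j = count_list w j"
  by (induction w) (simp_all add: word_monomial_def lookup_add lookup_single when_def)

lemma count_list_distinct: "distinct w \<Longrightarrow> count_list w j = (if j \<in> set w then 1 else 0)"
  by (induction w) auto

definition squarefree_monomial :: "('i \<Rightarrow>\<^sub>0 nat) \<Rightarrow> bool" where
  "squarefree_monomial \<beta> \<longleftrightarrow> (\<forall>j. Poly_Mapping.lookup \<beta> j \<le> 1)"

lemma squarefree_word_monomial:
  assumes "distinct w"
  shows "squarefree_monomial (word_monomial w)" and "Poly_Mapping.keys (word_monomial w) = set w"
  using assms by (auto simp: squarefree_monomial_def in_keys_iff lookup_word_monomial count_list_distinct
      split: if_splits)

lemma squarefree_monomial_minus_single: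
  assumes "squarefree_monomial \<beta>"
  shows "squarefree_monomial (\<beta> - Poly_Mapping.single i 1)"
    and "Poly_Mapping.keys (\<beta> - Poly_Mapping.single i 1) = Poly_Mapping.keys \<beta> - {i}"
proof -
  have "Poly_Mapping.lookup (\<beta> - Poly_Mapping.single i 1) j =
      (if j = i then 0 else Poly_Mapping.lookup \<beta> j)" for j
    using assms by (simp add: squarefree_monomial_def lookup_minus lookup_single when_def le_Suc_eq)
  then show "squarefree_monomial (\<beta> - Poly_Mapping.single i 1)"
    and "Poly_Mapping.keys (\<beta> - Poly_Mapping.single i 1) = Poly_Mapping.keys \<beta> - {i}"
    using assms by (auto simp: squarefree_monomial_def in_keys_iff split: if_splits)
qed

definition injective_words :: "nat \<Rightarrow> 'i set \<Rightarrow> 'i list set" where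
  "injective_words n I = {w. length w = n \<and> distinct w \<and> set w \<subseteq> I}"

lemma finite_injective_words: "finite I \<Longrightarrow> finite (injective_words n I)"
  unfolding injective_words_def
  by (rule finite_subset[OF _ finite_lists_length_eq[of I n]]) auto

lemma bij_betw_snoc_injective_words:
  "bij_betw (\<lambda>(i, w). w @ [i]) (SIGMA i:I. injective_words n (I - {i})) (injective_words (Suc n) I)"
proof (rule bij_betw_byWitness[where f' = "\<lambda>v. (last v, butlast v)"])
  show "(\<lambda>v. (last v, butlast v)) ` injective_words (Suc n) I \<subseteq>
      (SIGMA i:I. injective_words n (I - {i}))"
  proof clarify
    fix v assume v: "v \<in> injective_words (Suc n) I"
    then obtain u x where "v = u @ [x]"
      by (cases v rule: rev_cases) (auto simp: injective_words_def)
    with v show "last v \<in> I \<and> butlast v \<in> injective_words n (I - {last v})"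
      by (auto simp: injective_words_def)
  qed
qed (auto simp: injective_words_def intro!: append_butlast_last_id)

lemma partial_squarefree_monomial:
  assumes "squarefree_monomial \<beta>"
  shows "partial (Poly_Mapping.single \<beta> (1::'k::field)) =
    (\<Sum>i\<in>Poly_Mapping.keys \<beta>. Poly_Mapping.single (\<beta> - Poly_Mapping.single i 1, [i]) 1)"
proof -
  have "Poly_Mapping.lookup \<beta> i = 1" if "i \<in> Poly_Mapping.keys \<beta>" for i
    using assms that by (auto simp: squarefree_monomial_def in_keys_iff intro: le_antisym)
  then show ?thesis
    by (simp add: partial_def partial_mono_def map_times_one)
qed

lemma partial_pow_squarefree_monomial:
  assumes "squarefree_monomial \<beta>"
  shows "partial_pow n (Poly_Mapping.single \<beta> (1::'k::field)) =
    (\<Sum>w\<in>injective_words n (Poly_Mapping.keys \<beta>). Poly_Mapping.single (\<beta> - word_monomial w, w) 1)"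
  using assms
proof (induction n arbitrary: \<beta>)
  case 0
  have "injective_words 0 (Poly_Mapping.keys \<beta>) = {[]}"
    by (auto simp: injective_words_def)
  then show ?case
    by (simp add: embed0_def word_monomial_def)
next
  case (Suc n)
  let ?\<beta>' = "\<lambda>i. \<beta> - Poly_Mapping.single i 1"
  let ?W = "\<lambda>i. injective_words n (Poly_Mapping.keys \<beta> - {i})"
  have IH: "partial_pow n (Poly_Mapping.single (?\<beta>' i) (1::'k)) =
      (\<Sum>w\<in>?W i. Poly_Mapping.single (?\<beta>' i - word_monomial w, w) 1)" for i
    using Suc.IH squarefree_monomial_minus_single[OF Suc.prems] by simp
  have "partial_pow (Suc n) (Poly_Mapping.single \<beta> (1::'k)) =
      tensor_id (partial_pow n) (\<Sum>i\<in>Poly_Mapping.keys \<beta>. Poly_Mapping.single (?\<beta>' i, [i]) 1)"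
    by (simp add: partial_squarefree_monomial[OF Suc.prems])
  also have "\<dots> = (\<Sum>i\<in>Poly_Mapping.keys \<beta>.
      append_factor i (partial_pow n (Poly_Mapping.single (?\<beta>' i) 1)))"
    by (simp add: tensor_id_sum_single_inj_on inj_on_def map_times_one)
  also have "\<dots> = (\<Sum>i\<in>Poly_Mapping.keys \<beta>. \<Sum>w\<in>?W i.
      Poly_Mapping.single (?\<beta>' i - word_monomial w, w @ [i]) 1)"
  proof (intro sum.cong refl)
    fix i
    show "append_factor i (partial_pow n (Poly_Mapping.single (?\<beta>' i) 1)) =
        (\<Sum>w\<in>?W i. Poly_Mapping.single (?\<beta>' i - word_monomial w, w @ [i]) (1::'k))"
      unfolding IH
      by (rule append_factor_sum_single_inj_on) (auto simp: finite_injective_words inj_on_def)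
  qed
  also have "\<dots> = (\<Sum>(i, w)\<in>(SIGMA i:Poly_Mapping.keys \<beta>. ?W i).
      Poly_Mapping.single (\<beta> - word_monomial (w @ [i]), w @ [i]) 1)"
    by (simp add: sum.Sigma finite_injective_words word_monomial_snoc diff_diff_add add.commute)
  also have "\<dots> = (\<Sum>v\<in>injective_words (Suc n) (Poly_Mapping.keys \<beta>).
      Poly_Mapping.single (\<beta> - word_monomial v, v) 1)"
    using sum.reindex_bij_betw[OF bij_betw_snoc_injective_words,
        of "\<lambda>v. Poly_Mapping.single (\<beta> - word_monomial v, v) (1::'k)"]
    by (simp add: split_def)
  finally show ?case .
qed

lemma partial_pow_distinct_word_monomial_neq_zero:
  assumes "distinct w"
  shows "partial_pow (length w) (Poly_Mapping.single (word_monomial w) (1::'k::field)) \<noteq> 0"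
proof -
  let ?\<beta> = "word_monomial w"
  have "w \<in> injective_words (length w) (Poly_Mapping.keys ?\<beta>)"
    using assms by (simp add: injective_words_def squarefree_word_monomial(2))
  then have "Poly_Mapping.lookup (partial_pow (length w) (Poly_Mapping.single ?\<beta> (1::'k)))
      (?\<beta> - ?\<beta>, w) = 1"
    unfolding partial_pow_squarefree_monomial[OF squarefree_word_monomial(1)[OF assms]]
    by (intro lookup_sum_single_inj_on[where g = "\<lambda>v. (?\<beta> - word_monomial v, v)"])
      (auto simp: finite_injective_words inj_on_def)
  then show ?thesis
    by auto
qed

lemma ex_distinct_list_length:
  assumes "infinite (UNIV :: 'a set)"
  obtains w :: "'a list" where "length w = n" and "distinct w"
proof -
  obtain I :: "'a set" where "finite I" and "card I = n"
    using infinite_arbitrarily_large[OF assms] by blast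
  then show ?thesis
    using that finite_distinct_list distinct_card by metis
qed

theorem proposition7p8:
  fixes p :: nat and r :: nat
  assumes "CHAR('k::field) = p" and "p > 0"
    and "infinite (UNIV :: 'i set)"
  shows "S_le r \<noteq> (UNIV :: ('i, 'k) SA set)"
proof -
  obtain w :: "'i list" where "length w = Suc r" and "distinct w"
    using ex_distinct_list_length[OF assms(3)] by blast
  then have "Poly_Mapping.single (word_monomial w) (1::'k) \<notin> S_le r"
    using partial_pow_distinct_word_monomial_neq_zero[of w] by (simp add: S_le_def)
  then show ?thesis
    by blast
qed

end
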